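(* Let $N\in\mathbb N$. The set $$R_J(N)=\{f\in R(N): \exists a\in\mathbb R_{>0},\ \exists b,c\in\mathbb R \text{ such that } \operatorname{supp}(f)\subseteq\{(n,r)\in\mathbb R^2: n\ge ar^2+br+c\}\}$$ is a ring (a subring of $R(N)$).
   Context: $R(N)=\mathbb C[\zeta^{1/N},\zeta^{-1/N}]((q^{1/N}))$ denotes the ring of formal Laurent–Puiseux series $f=\sum_{n,r\in\frac1N\mathbb Z}c(n,r)q^n\zeta^r$ in which, for each $n$, only finitely many $r$ have $c(n,r)\neq0$, and $n$ is bounded below on the set of $(n,r)$ with $c(n,r)\ne 0$; multiplication is the usual multiplication of formal series. The support is $\operatorname{supp}(f)=\{(n,r)\in(\frac1N\mathbb Z)^2: c(n,r)\neq 0\}$. *)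

theory Defs
  imports Complex_Main
begin

text \<open>A formal series f = sum c(n,r) q^n zeta^r with n, r in (1/N)Z is represented by
  its coefficient function s :: int => int => complex, where s i j is the coefficient
  c(i/N, j/N) of q^(i/N) zeta^(j/N).\<close>

type_synonym series = "int \<Rightarrow> int \<Rightarrow> complex"

definition RN :: "nat \<Rightarrow> series set" where
  "RN N = {s. (\<forall>i. finite {j. s i j \<noteq> 0}) \<and> (\<exists>m. \<forall>i j. s i j \<noteq> 0 \<longrightarrow> m \<le> i)}"

definition supp :: "nat \<Rightarrow> series \<Rightarrow> (real \<times> real) set" where
  "supp N s = {(real_of_int i / real N, real_of_int j / real N) | i j. s i j \<noteq> 0}"

definition RJ :: "nat \<Rightarrow> series set" where
  "RJ N = {s \<in> RN N. \<exists>a b c. a > 0 \<and>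
      supp N s \<subseteq> {(n, r). n \<ge> a * r^2 + b * r + c}}"

definition ser_zero :: series where "ser_zero = (\<lambda>i j. 0)"
definition ser_one :: series where "ser_one = (\<lambda>i j. if i = 0 \<and> j = 0 then 1 else 0)"
definition ser_add :: "series \<Rightarrow> series \<Rightarrow> series" where
  "ser_add s t = (\<lambda>i j. s i j + t i j)"
definition ser_neg :: "series \<Rightarrow> series" where
  "ser_neg s = (\<lambda>i j. - s i j)"

text \<open>Product of formal series (Cauchy product); for s, t in R(N) the index set is finite.\<close>
definition ser_mult :: "series \<Rightarrow> series \<Rightarrow> series" where
  "ser_mult s t = (\<lambda>i j. \<Sum>p\<in>{(i1, j1). s i1 j1 \<noteq> 0 \<and> t (i - i1) (j - j1) \<noteq> 0}.
      s (fst p) (snd p) * t (i - fst p) (j - snd p))"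

end

theory Submission
  imports Defs
begin

text \<open>
  After completing the square, the condition defining \<open>R_J(N)\<close> says that the nonzero
  coefficients \<open>c(i/N, j/N)\<close> satisfy \<open>a j\<^sup>2 + C \<le> i\<close> for some \<open>a > 0\<close>. This condition is
  preserved by sums (take the smaller \<open>a\<close> and \<open>C\<close>) and by Cauchy products: every nonzero
  coefficient of \<open>s t\<close> at \<open>(i, j)\<close> comes from a pair \<open>(i\<^sub>1, j\<^sub>1) + (i\<^sub>2, j\<^sub>2)\<close> with
  both factors nonzero, and \<open>(j\<^sub>1 + j\<^sub>2)\<^sup>2 \<le> 2 (j\<^sub>1\<^sup>2 + j\<^sub>2\<^sup>2)\<close> costs only a factor \<open>2\<close> in \<open>a\<close>.
\<close>

definition parabolically_bounded :: "series \<Rightarrow> bool" where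
  "parabolically_bounded s \<longleftrightarrow>
     (\<exists>a C. a > (0::real) \<and> (\<forall>i j. s i j \<noteq> 0 \<longrightarrow> a * (real_of_int j)\<^sup>2 + C \<le> real_of_int i))"

lemma parabolically_boundedI:
  assumes "a > 0" "\<And>i j. s i j \<noteq> 0 \<Longrightarrow> a * (real_of_int j)\<^sup>2 + C \<le> real_of_int i"
  shows "parabolically_bounded s"
  using assms unfolding parabolically_bounded_def by blast

lemma parabolically_boundedE:
  assumes "parabolically_bounded s"
  obtains a C where "a > 0" "\<And>i j. s i j \<noteq> 0 \<Longrightarrow> a * (real_of_int j)\<^sup>2 + C \<le> real_of_int i"
  using assms unfolding parabolically_bounded_def by blast

lemma parabolically_boundedE2:
  assumes "parabolically_bounded s" "parabolically_bounded t"
  obtains a C where "a > 0"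
    "\<And>i j. s i j \<noteq> 0 \<Longrightarrow> a * (real_of_int j)\<^sup>2 + C \<le> real_of_int i"
    "\<And>i j. t i j \<noteq> 0 \<Longrightarrow> a * (real_of_int j)\<^sup>2 + C \<le> real_of_int i"
proof -
  obtain a1 C1 where a1: "a1 > 0" and s: "\<And>i j. s i j \<noteq> 0 \<Longrightarrow> a1 * (real_of_int j)\<^sup>2 + C1 \<le> real_of_int i"
    using assms(1) by (elim parabolically_boundedE) blast
  obtain a2 C2 where a2: "a2 > 0" and t: "\<And>i j. t i j \<noteq> 0 \<Longrightarrow> a2 * (real_of_int j)\<^sup>2 + C2 \<le> real_of_int i"
    using assms(2) by (elim parabolically_boundedE) blast
  have le1: "min a1 a2 * x\<^sup>2 + min C1 C2 \<le> a1 * x\<^sup>2 + C1"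
    and le2: "min a1 a2 * x\<^sup>2 + min C1 C2 \<le> a2 * x\<^sup>2 + C2" for x :: real
    by (intro add_mono mult_right_mono; simp)+
  show thesis
  proof (rule that)
    show "min a1 a2 > 0"
      using a1 a2 by simp
    show "min a1 a2 * (real_of_int j)\<^sup>2 + min C1 C2 \<le> real_of_int i" if "s i j \<noteq> 0" for i j
      using le1 s[OF that] by (rule order_trans)
    show "min a1 a2 * (real_of_int j)\<^sup>2 + min C1 C2 \<le> real_of_int i" if "t i j \<noteq> 0" for i j
      using le2 t[OF that] by (rule order_trans)
  qed
qed

lemma abs_le_power2_int: "\<bar>j\<bar> \<le> (j::int)\<^sup>2"
proof (cases "j = 0")
  case False
  then have "\<bar>j\<bar> * 1 \<le> \<bar>j\<bar> * \<bar>j\<bar>"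
    by (intro mult_left_mono) auto
  then show ?thesis
    by (simp add: power2_eq_square abs_mult[symmetric])
qed simp

lemma finite_int_power2_bounded: "finite {j::int. a * (real_of_int j)\<^sup>2 \<le> K}"
  if "a > 0" for a K :: real
proof (rule finite_subset)
  show "{j::int. a * (real_of_int j)\<^sup>2 \<le> K} \<subseteq> {-\<lceil>K / a\<rceil>..\<lceil>K / a\<rceil>}"
  proof
    fix j :: int
    assume "j \<in> {j. a * (real_of_int j)\<^sup>2 \<le> K}"
    with \<open>a > 0\<close> have "(real_of_int j)\<^sup>2 \<le> K / a"
      by (simp add: field_simps)
    moreover have "real_of_int \<bar>j\<bar> \<le> (real_of_int j)\<^sup>2"
      using abs_le_power2_int[of j] by (metis of_int_le_iff of_int_power)
    ultimately have "\<bar>j\<bar> \<le> \<lceil>K / a\<rceil>"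
      by linarith
    then show "j \<in> {-\<lceil>K / a\<rceil>..\<lceil>K / a\<rceil>}"
      by auto
  qed
qed simp

lemma parabolically_bounded_imp_RN:
  assumes "parabolically_bounded s"
  shows "s \<in> RN N"
proof -
  obtain a C where a: "a > 0" and bound: "\<And>i j. s i j \<noteq> 0 \<Longrightarrow> a * (real_of_int j)\<^sup>2 + C \<le> real_of_int i"
    using assms by (elim parabolically_boundedE) blast
  have "finite {j. s i j \<noteq> 0}" for i
    using finite_int_power2_bounded[OF a, of "real_of_int i - C"]
    by (rule finite_subset[rotated]) (auto dest: bound)
  moreover have "\<lfloor>C\<rfloor> \<le> i" if "s i j \<noteq> 0" for i j
    using bound[OF that] a zero_le_power2[of "real_of_int j"] mult_nonneg_nonneg[of a]
    by (smt (verit) floor_le_iff)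
  ultimately show ?thesis
    unfolding RN_def by blast
qed

lemma quadratic_ge_half_square:
  fixes a b c x :: real
  assumes "a > 0"
  shows "a / 2 * x\<^sup>2 + (c - b\<^sup>2 / (2 * a)) \<le> a * x\<^sup>2 + b * x + c"
proof -
  have "a * x\<^sup>2 + b * x + c - (a / 2 * x\<^sup>2 + (c - b\<^sup>2 / (2 * a))) = a / 2 * (x + b / a)\<^sup>2"
    using assms by (simp add: field_simps power2_eq_square)
  also have "\<dots> \<ge> 0"
    using assms by simp
  finally show ?thesis
    by simp
qed

lemma parabolically_bounded_if_mem_RJ:
  assumes "N > 0" "s \<in> RJ N"
  shows "parabolically_bounded s"
proof -
  have N: "real N > 0"
    using assms(1) by simp
  obtain a b c where a: "a > 0" and supp: "supp N s \<subseteq> {(n, r). n \<ge> a * r\<^sup>2 + b * r + c}"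
    using assms(2) unfolding RJ_def by blast
  have "a / (2 * real N) * (real_of_int j)\<^sup>2 + real N * (c - b\<^sup>2 / (2 * a)) \<le> real_of_int i"
    if "s i j \<noteq> 0" for i j
  proof -
    define x where "x = real_of_int j / real N"
    have "a * x\<^sup>2 + b * x + c \<le> real_of_int i / real N"
      using supp that unfolding supp_def x_def by blast
    with quadratic_ge_half_square[OF a, of x c b]
    have "a / 2 * x\<^sup>2 + (c - b\<^sup>2 / (2 * a)) \<le> real_of_int i / real N"
      by linarith
    then have "real N * (a / 2 * x\<^sup>2) + real N * (c - b\<^sup>2 / (2 * a)) \<le> real_of_int i"
      using N by (simp add: field_simps)
    moreover have "real N * (a / 2 * x\<^sup>2) = a / (2 * real N) * (real_of_int j)\<^sup>2"
      using N by (simp add: x_def field_simps power2_eq_square)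
    ultimately show ?thesis
      by simp
  qed
  moreover have "a / (2 * real N) > 0"
    using a N by simp
  ultimately show ?thesis
    by (intro parabolically_boundedI) blast+
qed

lemma mem_RJ_if_parabolically_bounded:
  assumes "N > 0" "parabolically_bounded s"
  shows "s \<in> RJ N"
proof -
  have N: "real N > 0"
    using assms(1) by simp
  obtain a C where a: "a > 0" and bound: "\<And>i j. s i j \<noteq> 0 \<Longrightarrow> a * (real_of_int j)\<^sup>2 + C \<le> real_of_int i"
    using assms(2) by (elim parabolically_boundedE) blast
  have "supp N s \<subseteq> {(n, r). n \<ge> (a * real N) * r\<^sup>2 + 0 * r + C / real N}"
  proof
    fix p
    assume "p \<in> supp N s"
    then obtain i j where p: "p = (real_of_int i / real N, real_of_int j / real N)" and "s i j \<noteq> 0"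
      unfolding supp_def by blast
    with bound N have "(a * (real_of_int j)\<^sup>2 + C) / real N \<le> real_of_int i / real N"
      by (simp add: divide_right_mono)
    moreover have "(a * (real_of_int j)\<^sup>2 + C) / real N
        = (a * real N) * (real_of_int j / real N)\<^sup>2 + 0 * (real_of_int j / real N) + C / real N"
      using N by (simp add: field_simps power2_eq_square)
    ultimately show "p \<in> {(n, r). n \<ge> (a * real N) * r\<^sup>2 + 0 * r + C / real N}"
      using p by simp
  qed
  moreover have "a * real N > 0"
    using a N by simp
  ultimately show ?thesis
    unfolding RJ_def using parabolically_bounded_imp_RN[OF assms(2)] by blast
qed

lemma RJ_eq_parabolically_bounded:
  assumes "N > 0"
  shows "RJ N = {s. parabolically_bounded s}"
  using parabolically_bounded_if_mem_RJ[OF assms] mem_RJ_if_parabolically_bounded[OF assms] by blast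

lemma parabolically_bounded_zero: "parabolically_bounded ser_zero"
  by (rule parabolically_boundedI[of 1 _ 0]) (simp_all add: ser_zero_def)

lemma parabolically_bounded_one: "parabolically_bounded ser_one"
  by (rule parabolically_boundedI[of 1 _ 0]) (simp_all add: ser_one_def split: if_splits)

lemma parabolically_bounded_add:
  assumes "parabolically_bounded s" "parabolically_bounded t"
  shows "parabolically_bounded (ser_add s t)"
proof -
  obtain a C where a: "a > 0"
    and s: "\<And>i j. s i j \<noteq> 0 \<Longrightarrow> a * (real_of_int j)\<^sup>2 + C \<le> real_of_int i"
    and t: "\<And>i j. t i j \<noteq> 0 \<Longrightarrow> a * (real_of_int j)\<^sup>2 + C \<le> real_of_int i"
    using parabolically_boundedE2[OF assms] by blast
  show ?thesis
  proof (rule parabolically_boundedI[OF a])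
    fix i j
    assume "ser_add s t i j \<noteq> 0"
    then have "s i j \<noteq> 0 \<or> t i j \<noteq> 0"
      unfolding ser_add_def by auto
    then show "a * (real_of_int j)\<^sup>2 + C \<le> real_of_int i"
      using s t by blast
  qed
qed

lemma parabolically_bounded_neg:
  "parabolically_bounded s \<Longrightarrow> parabolically_bounded (ser_neg s)"
  unfolding parabolically_bounded_def ser_neg_def by simp

lemma ser_mult_nonzeroE:
  assumes "ser_mult s t i j \<noteq> 0"
  obtains i1 j1 where "s i1 j1 \<noteq> 0" "t (i - i1) (j - j1) \<noteq> 0"
proof -
  have "{(i1, j1). s i1 j1 \<noteq> 0 \<and> t (i - i1) (j - j1) \<noteq> 0} \<noteq> {}"
    using assms unfolding ser_mult_def by (metis sum.empty)
  then show thesis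
    using that by blast
qed

lemma parabolically_bounded_mult:
  assumes "parabolically_bounded s" "parabolically_bounded t"
  shows "parabolically_bounded (ser_mult s t)"
proof -
  obtain a C where a: "a > 0"
    and s: "\<And>i j. s i j \<noteq> 0 \<Longrightarrow> a * (real_of_int j)\<^sup>2 + C \<le> real_of_int i"
    and t: "\<And>i j. t i j \<noteq> 0 \<Longrightarrow> a * (real_of_int j)\<^sup>2 + C \<le> real_of_int i"
    using parabolically_boundedE2[OF assms] by blast
  have "a / 2 * (real_of_int j)\<^sup>2 + 2 * C \<le> real_of_int i" if nonzero: "ser_mult s t i j \<noteq> 0" for i j
  proof -
    obtain i1 j1 where "s i1 j1 \<noteq> 0" "t (i - i1) (j - j1) \<noteq> 0"
      using nonzero by (rule ser_mult_nonzeroE)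
    from s[OF this(1)] t[OF this(2)]
    have "a * ((real_of_int j1)\<^sup>2 + (real_of_int (j - j1))\<^sup>2) + 2 * C \<le> real_of_int i"
      by (simp add: algebra_simps)
    moreover have "(real_of_int j)\<^sup>2 \<le> 2 * ((real_of_int j1)\<^sup>2 + (real_of_int (j - j1))\<^sup>2)"
      using power2_sum[of "real_of_int j1" "real_of_int (j - j1)"]
        sum_squares_bound[of "real_of_int j1" "real_of_int (j - j1)"]
      by simp
    then have "a / 2 * (real_of_int j)\<^sup>2 \<le> a * ((real_of_int j1)\<^sup>2 + (real_of_int (j - j1))\<^sup>2)"
      using a by (simp add: mult_left_mono)
    ultimately show ?thesis
      by linarith
  qed
  with a show ?thesis
    by (intro parabolically_boundedI[of "a / 2"]) simp_all
qed

theorem proposition4p3: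
  fixes N :: nat
  assumes "N \<ge> 1"
  shows "RJ N \<subseteq> RN N \<and> ser_zero \<in> RJ N \<and> ser_one \<in> RJ N
    \<and> (\<forall>s\<in>RJ N. \<forall>t\<in>RJ N. ser_add s t \<in> RJ N)
    \<and> (\<forall>s\<in>RJ N. ser_neg s \<in> RJ N)
    \<and> (\<forall>s\<in>RJ N. \<forall>t\<in>RJ N. ser_mult s t \<in> RJ N)"
proof -
  have pos: "N > 0"
    using assms by simp
  show ?thesis
    unfolding RJ_eq_parabolically_bounded[OF pos]
    using parabolically_bounded_imp_RN parabolically_bounded_zero parabolically_bounded_one
      parabolically_bounded_add parabolically_bounded_neg parabolically_bounded_mult
    by auto
qed

end
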